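(* Let $X$ be a finite connected poset and $\theta:B\to B$ a bijection. Then $\theta$ is admissible if and only if $s^+_{\theta,\Gamma}(z)-s^-_{\theta,\Gamma}(z)=t^+_{\theta,\Gamma}(z)-t^-_{\theta,\Gamma}(z)$ holds for every cycle $\Gamma$ in $X$ and every $z\in X$.
   Context: For $x<y$ let $e_{xy}$ denote the pair/basis symbol indexed by $(x,y)$ and $B=\{e_{xy}:x<y\}$. A walk in $X$ is a sequence $u_0,\dots,u_m$ such that for each $i$ one of $u_i,u_{i+1}$ covers the other; it is closed if $u_0=u_m$; a cycle is a closed walk $u_0,\dots,u_m=u_0$ with $m\ge4$ and $u_i\ne u_j$ for all $i\ne j$ other than $\{i,j\}=\{0,m\}$. $X$ is connected if any two elements are joined by a walk. For a closed walk $\Gamma:u_0,\dots,u_m=u_0$ and $z\in X$: $s^+_{\theta,\Gamma}(z)$ is the number of $i$ with $u_i<u_{i+1}$ such that $\theta(e_{zw})=e_{u_iu_{i+1}}$ for some $w>z$; $s^-_{\theta,\Gamma}(z)$ the number of $i$ with $u_i>u_{i+1}$ such that $\theta(e_{zw})=e_{u_{i+1}u_i}$ for some $w>z$; $t^+_{\theta,\Gamma}(z)$ the number of $i$ with $u_i<u_{i+1}$ such that $\theta(e_{wz})=e_{u_iu_{i+1}}$ for some $w<z$; $t^-_{\theta,\Gamma}(z)$ the number of $i$ with $u_i>u_{i+1}$ such that $\theta(e_{wz})=e_{u_{i+1}u_i}$ for some $w<z$. $\theta$ is admissible if $s^+_{\theta,\Gamma}(z)-s^-_{\theta,\Gamma}(z)=t^+_{\theta,\Gamma}(z)-t^-_{\theta,\Gamma}(z)$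 for every closed walk $\Gamma$ and every $z\in X$. *)

theory Defs
  imports Main
begin

text \<open>A finite poset is represented as a finite carrier set X in a type of class order,
  with the induced order.\<close>

definition covers :: "'a::order set \<Rightarrow> 'a \<Rightarrow> 'a \<Rightarrow> bool" where
  "covers X x y \<longleftrightarrow> x \<in> X \<and> y \<in> X \<and> x < y \<and> \<not> (\<exists>z\<in>X. x < z \<and> z < y)"

text \<open>The index set B of pairs (x,y) with x<y in X; the symbol e_xy is the pair (x,y).\<close>
definition pairsB :: "'a::order set \<Rightarrow> ('a \<times> 'a) set" where
  "pairsB X = {(x, y). x \<in> X \<and> y \<in> X \<and> x < y}"

text \<open>A walk u_0,...,u_m is a nonempty list of length m+1.\<close>
definition is_walk :: "'a::order set \<Rightarrow> 'a list \<Rightarrow> bool" where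
  "is_walk X us \<longleftrightarrow> us \<noteq> [] \<and> set us \<subseteq> X \<and>
     (\<forall>i. Suc i < length us \<longrightarrow> covers X (us ! i) (us ! Suc i) \<or> covers X (us ! Suc i) (us ! i))"

definition is_closed_walk :: "'a::order set \<Rightarrow> 'a list \<Rightarrow> bool" where
  "is_closed_walk X us \<longleftrightarrow> is_walk X us \<and> hd us = last us"

definition is_cycle :: "'a::order set \<Rightarrow> 'a list \<Rightarrow> bool" where
  "is_cycle X us \<longleftrightarrow> is_closed_walk X us \<and> length us \<ge> 5 \<and>
     (\<forall>i j. i < length us \<and> j < length us \<and> i \<noteq> j \<and> {i, j} \<noteq> {0, length us - 1}
        \<longrightarrow> us ! i \<noteq> us ! j)"

definition poset_connected :: "'a::order set \<Rightarrow> bool" where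
  "poset_connected X \<longleftrightarrow> (\<forall>x\<in>X. \<forall>y\<in>X. \<exists>us. is_walk X us \<and> hd us = x \<and> last us = y)"

definition s_plus :: "'a::order set \<Rightarrow> ('a \<times> 'a \<Rightarrow> 'a \<times> 'a) \<Rightarrow> 'a list \<Rightarrow> 'a \<Rightarrow> nat" where
  "s_plus X \<theta> us z = card {i. Suc i < length us \<and> us ! i < us ! Suc i \<and>
     (\<exists>w\<in>X. z < w \<and> \<theta> (z, w) = (us ! i, us ! Suc i))}"

definition s_minus :: "'a::order set \<Rightarrow> ('a \<times> 'a \<Rightarrow> 'a \<times> 'a) \<Rightarrow> 'a list \<Rightarrow> 'a \<Rightarrow> nat" where
  "s_minus X \<theta> us z = card {i. Suc i < length us \<and> us ! Suc i < us ! i \<and>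
     (\<exists>w\<in>X. z < w \<and> \<theta> (z, w) = (us ! Suc i, us ! i))}"

definition t_plus :: "'a::order set \<Rightarrow> ('a \<times> 'a \<Rightarrow> 'a \<times> 'a) \<Rightarrow> 'a list \<Rightarrow> 'a \<Rightarrow> nat" where
  "t_plus X \<theta> us z = card {i. Suc i < length us \<and> us ! i < us ! Suc i \<and>
     (\<exists>w\<in>X. w < z \<and> \<theta> (w, z) = (us ! i, us ! Suc i))}"

definition t_minus :: "'a::order set \<Rightarrow> ('a \<times> 'a \<Rightarrow> 'a \<times> 'a) \<Rightarrow> 'a list \<Rightarrow> 'a \<Rightarrow> nat" where
  "t_minus X \<theta> us z = card {i. Suc i < length us \<and> us ! Suc i < us ! i \<and>
     (\<exists>w\<in>X. w < z \<and> \<theta> (w, z) = (us ! Suc i, us ! i))}"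

definition balanced_at :: "'a::order set \<Rightarrow> ('a \<times> 'a \<Rightarrow> 'a \<times> 'a) \<Rightarrow> 'a list \<Rightarrow> 'a \<Rightarrow> bool" where
  "balanced_at X \<theta> us z \<longleftrightarrow>
     int (s_plus X \<theta> us z) - int (s_minus X \<theta> us z) = int (t_plus X \<theta> us z) - int (t_minus X \<theta> us z)"

definition admissible :: "'a::order set \<Rightarrow> ('a \<times> 'a \<Rightarrow> 'a \<times> 'a) \<Rightarrow> bool" where
  "admissible X \<theta> \<longleftrightarrow> (\<forall>us z. is_closed_walk X us \<and> z \<in> X \<longrightarrow> balanced_at X \<theta> us z)"

end

theory Submission
  imports Defs
begin

text \<open>Along a walk, the defect
  \<open>(s\<^sup>+ - s\<^sup>-) - (t\<^sup>+ - t\<^sup>-)\<close> at z is the sum over the steps of an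
  antisymmetric function of the two endpoints. A closed walk that repeats a vertex other than
  at its two ends splits there into two shorter closed walks, and the sums add. A closed
  walk without such repetition is a cycle unless it has at most three steps; among those,
  the cover graph having no loops and no triangles leaves only the trivial walk and the
  back-and-forth walk \<open>u, v, u\<close>, whose sum vanishes by antisymmetry.\<close>

definition adj :: "'a::order set \<Rightarrow> 'a \<Rightarrow> 'a \<Rightarrow> bool" where
  "adj X x y \<longleftrightarrow> covers X x y \<or> covers X y x"

lemma is_walk_iff_successively:
  "is_walk X us \<longleftrightarrow> us \<noteq> [] \<and> set us \<subseteq> X \<and> successively (adj X) us"
  unfolding is_walk_def adj_def successively_conv_nth by blast

lemma adj_irrefl: "\<not> adj X a a"
  by (auto simp: adj_def covers_def)

lemma adj_no_triangle: "adj X a b \<Longrightarrow> adj X b c \<Longrightarrow> \<not> adj X c a"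
  unfolding adj_def covers_def by (metis order.strict_trans)

lemma successively_split_at_repeat:
  assumes "successively P (xs @ a # ys @ a # zs)"
  shows "successively P (a # ys @ [a])" and "successively P (xs @ a # zs)"
proof -
  have "successively P (xs @ [a]) \<and> successively P (a # ys @ [a]) \<and> successively P (a # zs)"
    using assms by (simp add: successively_append_iff successively_Cons) (cases ys; simp)
  then show "successively P (a # ys @ [a])" "successively P (xs @ a # zs)"
    by (auto simp: successively_append_iff)
qed

lemma split_list_at_positions:
  assumes "i < j" "j < length us"
  obtains xs ys zs where "us = xs @ us ! i # ys @ us ! j # zs"
    "length xs = i" "length zs = length us - Suc j"
proof -
  have "drop (Suc i) us = take (j - Suc i) (drop (Suc i) us) @ us ! j # drop (Suc j) us"
    using assms by (metis Cons_nth_drop_Suc Suc_leI append_take_drop_id drop_drop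
        le_add_diff_inverse2)
  then have "us = take i us @ us ! i # take (j - Suc i) (drop (Suc i) us)
      @ us ! j # drop (Suc j) us"
    using id_take_nth_drop[of i us] assms by (metis order.strict_trans)
  then show ?thesis
    by (rule that) (use assms in simp_all)
qed

lemma closed_walk_split_at_repeat:
  assumes "is_closed_walk X (xs @ a # ys @ a # zs)"
  shows "is_closed_walk X (a # ys @ [a])" and "is_closed_walk X (xs @ a # zs)"
proof -
  have "successively (adj X) (xs @ a # ys @ a # zs)" and set: "set (xs @ a # ys @ a # zs) \<subseteq> X"
    and ends: "hd (xs @ a # ys @ a # zs) = last (xs @ a # ys @ a # zs)"
    using assms by (auto simp: is_closed_walk_def is_walk_iff_successively)
  moreover have "hd (xs @ a # zs) = last (xs @ a # zs)"
    using ends by (cases xs; cases zs) auto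
  ultimately show "is_closed_walk X (a # ys @ [a])" "is_closed_walk X (xs @ a # zs)"
    using successively_split_at_repeat
    by (auto simp: is_closed_walk_def is_walk_iff_successively)
qed

fun walk_sum :: "('a \<Rightarrow> 'a \<Rightarrow> 'b::comm_monoid_add) \<Rightarrow> 'a list \<Rightarrow> 'b" where
  "walk_sum g [] = 0"
| "walk_sum g [x] = 0"
| "walk_sum g (x # y # xs) = g x y + walk_sum g (y # xs)"

lemma walk_sum_append: "walk_sum g (xs @ a # ys) = walk_sum g (xs @ [a]) + walk_sum g (a # ys)"
  by (induction g xs rule: walk_sum.induct) (auto simp: add.assoc)

lemma walk_sum_split_at_repeat:
  "walk_sum g (xs @ a # ys @ a # zs) = walk_sum g (a # ys @ [a]) + walk_sum g (xs @ a # zs)"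
  using walk_sum_append[of g xs a "ys @ a # zs"] walk_sum_append[of g "a # ys" a zs]
    walk_sum_append[of g xs a zs] by (simp add: ac_simps)

lemma walk_sum_conv_sum: "walk_sum g us = (\<Sum>i<length us - 1. g (us ! i) (us ! Suc i))"
proof (induction g us rule: walk_sum.induct)
  case (3 g x y xs)
  then show ?case
    using sum.lessThan_Suc_shift[of "\<lambda>i. g ((x # y # xs) ! i) ((x # y # xs) ! Suc i)"
        "length xs"] by simp
qed auto

lemma walk_sum_short_closed_walk:
  fixes g :: "'a::order \<Rightarrow> 'a \<Rightarrow> 'b::ab_group_add"
  assumes antisym: "\<And>u v. g u v = - g v u"
    and walk: "is_closed_walk X us" and short: "length us < 5"
  shows "walk_sum g us = 0"
proof -
  have adj: "successively (adj X) us" and ends: "hd us = last us" and "us \<noteq> []"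
    using walk by (auto simp: is_closed_walk_def is_walk_iff_successively)
  then consider a where "us = [a]" | a b where "us = [a, b]" | a b c where "us = [a, b, c]"
    | a b c d where "us = [a, b, c, d]"
    using short by (auto simp: numeral_eq_Suc less_Suc_eq length_Suc_conv)
  then show ?thesis
  proof cases
    case (2 a b)
    then show ?thesis using adj ends adj_irrefl[of X a] by simp
  next
    case (3 a b c)
    then show ?thesis using ends antisym[of a b] by simp
  next
    case (4 a b c d)
    then show ?thesis using adj ends adj_no_triangle[of X a b c] by simp
  qed simp
qed

lemma not_cycle_obtains_repeat:
  assumes "is_closed_walk X us" "length us \<ge> 5" "\<not> is_cycle X us"
  obtains i j where "i < j" "j < length us" "(i, j) \<noteq> (0, length us - 1)" "us ! i = us ! j"
proof -
  obtain i j where ij: "i < length us" "j < length us" "i \<noteq> j" "{i, j} \<noteq> {0, length us - 1}"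
    "us ! i = us ! j"
    using assms unfolding is_cycle_def by (metis (no_types, lifting))
  show ?thesis
  proof (cases "i < j")
    case True
    with ij show ?thesis by (intro that[of i j]) auto
  next
    case False
    with ij show ?thesis by (intro that[of j i]) (auto simp: insert_commute)
  qed
qed

lemma walk_sum_closed_walk_eq_0:
  fixes g :: "'a::order \<Rightarrow> 'a \<Rightarrow> 'b::ab_group_add"
  assumes antisym: "\<And>u v. g u v = - g v u"
    and cycles: "\<And>us. is_cycle X us \<Longrightarrow> walk_sum g us = 0"
  shows "is_closed_walk X us \<Longrightarrow> walk_sum g us = 0"
proof (induction "length us" arbitrary: us rule: less_induct)
  case less
  consider (short) "length us < 5" | (cycle) "is_cycle X us"
    | (repeat) i j where "i < j" "j < length us" "(i, j) \<noteq> (0, length us - 1)" "us ! i = us ! j"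
    using not_cycle_obtains_repeat[OF less.prems] by (metis not_le)
  then show ?case
  proof cases
    case short
    then show ?thesis using walk_sum_short_closed_walk[where g = g, OF antisym less.prems] by blast
  next
    case cycle
    then show ?thesis by (rule cycles)
  next
    case (repeat i j)
    define a where "a = us ! i"
    obtain xs ys zs where us: "us = xs @ a # ys @ a # zs"
      and len_xs: "length xs = i" and len_zs: "length zs = length us - Suc j"
      using split_list_at_positions[OF repeat(1,2)] unfolding a_def repeat(4) by blast
    have len_us: "length us = length xs + length ys + length zs + 2"
      using arg_cong[OF us, of length] by simp
    have "xs \<noteq> [] \<or> zs \<noteq> []"
      using repeat(2,3) len_xs len_zs by auto
    then have "length (a # ys @ [a]) < length us" "length (xs @ a # zs) < length us"
      using len_us by auto
    moreover note closed_walk_split_at_repeat[OF less.prems[unfolded us]]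
    ultimately show ?thesis
      using less.hyps unfolding us walk_sum_split_at_repeat by simp
  qed
qed

definition edge_flow ::
    "'a::order set \<Rightarrow> ('a \<times> 'a \<Rightarrow> 'a \<times> 'a) \<Rightarrow> 'a \<Rightarrow> 'a \<Rightarrow> 'a \<Rightarrow> int" where
  "edge_flow X \<theta> z u v = of_bool (u < v \<and> (\<exists>w\<in>X. z < w \<and> \<theta> (z, w) = (u, v)))
     - of_bool (u < v \<and> (\<exists>w\<in>X. w < z \<and> \<theta> (w, z) = (u, v)))"

definition step_flow ::
    "'a::order set \<Rightarrow> ('a \<times> 'a \<Rightarrow> 'a \<times> 'a) \<Rightarrow> 'a \<Rightarrow> 'a \<Rightarrow> 'a \<Rightarrow> int" where
  "step_flow X \<theta> z u v = edge_flow X \<theta> z u v - edge_flow X \<theta> z v u"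

lemma card_steps_conv_sum: "int (card {i. Suc i < n \<and> P i}) = (\<Sum>i<n - 1. of_bool (P i))"
proof -
  have "{i. Suc i < n \<and> P i} = {..<n - 1} \<inter> {i. P i}" by auto
  then show ?thesis by simp
qed

lemma walk_sum_step_flow:
  "walk_sum (step_flow X \<theta> z) us =
     (int (s_plus X \<theta> us z) - int (s_minus X \<theta> us z))
     - (int (t_plus X \<theta> us z) - int (t_minus X \<theta> us z))"
  unfolding s_plus_def s_minus_def t_plus_def t_minus_def card_steps_conv_sum
    walk_sum_conv_sum step_flow_def edge_flow_def
  by (simp add: sum_subtractf)

lemma balanced_at_iff_walk_sum: "balanced_at X \<theta> us z \<longleftrightarrow> walk_sum (step_flow X \<theta> z) us = 0"
  unfolding balanced_at_def walk_sum_step_flow by linarith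

theorem lemma5p13:
  fixes X :: "'a::order set" and \<theta> :: "'a \<times> 'a \<Rightarrow> 'a \<times> 'a"
  assumes "finite X" and "poset_connected X" and "bij_betw \<theta> (pairsB X) (pairsB X)"
  shows "admissible X \<theta> \<longleftrightarrow>
    (\<forall>us z. is_cycle X us \<and> z \<in> X \<longrightarrow> balanced_at X \<theta> us z)"
proof
  assume "admissible X \<theta>"
  then show "\<forall>us z. is_cycle X us \<and> z \<in> X \<longrightarrow> balanced_at X \<theta> us z"
    unfolding admissible_def is_cycle_def by blast
next
  assume cycles: "\<forall>us z. is_cycle X us \<and> z \<in> X \<longrightarrow> balanced_at X \<theta> us z"
  have "walk_sum (step_flow X \<theta> z) us = 0" if "is_closed_walk X us" "z \<in> X" for us z
  proof (rule walk_sum_closed_walk_eq_0[OF _ _ \<open>is_closed_walk X us\<close>])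
    show "step_flow X \<theta> z u v = - step_flow X \<theta> z v u" for u v
      unfolding step_flow_def by simp
    show "walk_sum (step_flow X \<theta> z) vs = 0" if "is_cycle X vs" for vs
      using cycles \<open>z \<in> X\<close> that balanced_at_iff_walk_sum by blast
  qed
  then show "admissible X \<theta>"
    unfolding admissible_def balanced_at_iff_walk_sum by blast
qed

end
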